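(* Let $d\in\mathbb{N}$ with $d\ge 2$ and let $\omega\ge 1/d$. Then \[\left\{\boldsymbol{\alpha}\in K_d:\lim_{Q\to\infty}Q^\omega\min_{0<q\le Q}\|q\boldsymbol{\alpha}\|=0\right\}\subseteq E(d-1+d\omega).\]
   Context: For $\boldsymbol{x}\in\mathbb{R}^d$, $|\boldsymbol{x}|=\max_i|x_i|$ and $\|\boldsymbol{x}\|=\min_{\boldsymbol{p}\in\mathbb{Z}^d}|\boldsymbol{x}-\boldsymbol{p}|$; for $x\in\mathbb{R}$, $\|x\|$ is the distance to the nearest integer. $q$ ranges over integers. $K_d$ is the set of $\boldsymbol{\alpha}\in\mathbb{R}^d$ with $1,\alpha_1,\dots,\alpha_d$ linearly independent over $\mathbb{Q}$. For $\boldsymbol{r},\boldsymbol{\alpha}\in\mathbb{R}^d$, $\boldsymbol{r}\boldsymbol{\alpha}$ is the standard inner product. For real $\omega'\ge d$, \[E(\omega')=\left\{\boldsymbol{\alpha}\in K_d:\lim_{R\to\infty}R^{\omega'}\min\{\|\boldsymbol{r}\boldsymbol{\alpha}\|:\boldsymbol{r}\in\mathbb{Z}^d,\ 0<|\boldsymbol{r}|\le R\}=0\right\}.\] *)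

theory Defs
  imports "HOL-Analysis.Analysis"
begin

definition supnorm :: "real ^ 'n::finite \<Rightarrow> real" where
  "supnorm x = Max (range (\<lambda>i. \<bar>x $ i\<bar>))"

definition dist_lattice :: "real ^ 'n::finite \<Rightarrow> real" where
  "dist_lattice x = Inf {supnorm (x - (\<chi> i. of_int (p $ i))) | p :: int ^ 'n. True}"

definition dist_int :: "real \<Rightarrow> real" where
  "dist_int x = Inf {\<bar>x - of_int k\<bar> | k :: int. True}"

definition Kd :: "(real ^ 'n::finite) set" where
  "Kd = {\<alpha>. \<forall>(c0::rat) (c :: 'n \<Rightarrow> rat).
           of_rat c0 + (\<Sum>i\<in>UNIV. of_rat (c i) * \<alpha> $ i) = 0 \<longrightarrow> c0 = 0 \<and> (\<forall>i. c i = 0)}"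

definition int_inner :: "int ^ 'n::finite \<Rightarrow> real ^ 'n \<Rightarrow> real" where
  "int_inner r \<alpha> = (\<Sum>i\<in>UNIV. of_int (r $ i) * \<alpha> $ i)"

definition int_supnorm :: "int ^ 'n::finite \<Rightarrow> int" where
  "int_supnorm r = Max (range (\<lambda>i. \<bar>r $ i\<bar>))"

definition min_simult :: "real ^ 'n::finite \<Rightarrow> real \<Rightarrow> real" where
  "min_simult \<alpha> Q = Min ((\<lambda>q::int. dist_lattice (of_int q *\<^sub>R \<alpha>)) ` {q. 0 < q \<and> real_of_int q \<le> Q})"

definition min_linform :: "real ^ 'n::finite \<Rightarrow> real \<Rightarrow> real" where
  "min_linform \<alpha> R = Min ((\<lambda>r. dist_int (int_inner r \<alpha>)) `
                        {r :: int ^ 'n. 0 < int_supnorm r \<and> real_of_int (int_supnorm r) \<le> R})"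

definition E_set :: "real \<Rightarrow> (real ^ 'n::finite) set" where
  "E_set \<omega>' = {\<alpha> \<in> Kd. ((\<lambda>R. R powr \<omega>' * min_linform \<alpha> R) \<longlongrightarrow> 0) at_top}"

end

theory Submission
  imports Defs
begin

(* Suppose 0 < q <= N^d and q alpha = p + eta with p integral and |eta| <= eps.  Sort the
   (N+1)^d vectors r in [0,N]^d by r.p mod q and by which of M = N^d div q equal subintervals
   of [-dN eps, dN eps] contains r.eta.  As qM < (N+1)^d, two of them fall into the same class,
   and their difference r satisfies 0 < |r| <= N, q | r.p and |r.eta| <= 2dN eps/M, whence
   ||r alpha|| <= |r.eta|/q <= 4dN eps/N^d.  With Q = N^d and eps = min_{q<=Q} ||q alpha||
   = o(Q^-omega) this gives min_{0<|r|<=N} ||r alpha|| = o(N^-(d-1+d omega)); passing from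
   R to N = floor R costs a factor 2^(d-1+d omega), which is harmless as omega >= 1/d makes
   the exponent nonnegative.  Membership in K_d is merely carried over. *)

lemma vec_box_eq_image_PiE:
  "{r :: 'a ^ 'n::finite. \<forall>i. r $ i \<in> B} = vec_lambda ` PiE UNIV (\<lambda>_. B)"
proof
  show "{r :: 'a ^ 'n. \<forall>i. r $ i \<in> B} \<subseteq> vec_lambda ` PiE UNIV (\<lambda>_. B)"
  proof
    fix r :: "'a ^ 'n" assume "r \<in> {r. \<forall>i. r $ i \<in> B}"
    then have "vec_nth r \<in> PiE UNIV (\<lambda>_. B)" by (auto simp: PiE_UNIV_domain)
    then show "r \<in> vec_lambda ` PiE UNIV (\<lambda>_. B)" by (metis image_eqI vec_nth_inverse)
  qed
qed auto

lemma finite_vec_box: "finite B \<Longrightarrow> finite {r :: 'a ^ 'n::finite. \<forall>i. r $ i \<in> B}"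
  unfolding vec_box_eq_image_PiE by (intro finite_imageI finite_PiE) auto

lemma card_vec_box:
  assumes "finite B"
  shows "card {r :: 'a ^ 'n::finite. \<forall>i. r $ i \<in> B} = card B ^ CARD('n)"
proof -
  have "inj_on (vec_lambda :: ('n \<Rightarrow> 'a) \<Rightarrow> 'a ^ 'n) X" for X
    by (auto simp: inj_on_def vec_lambda_inject)
  then show ?thesis unfolding vec_box_eq_image_PiE using assms by (simp add: card_image card_PiE)
qed

lemma pigeonhole_vec_box:
  fixes f :: "'a ^ 'n::finite \<Rightarrow> 'b"
  assumes "finite B" "finite T" "card T < card B ^ CARD('n)"
    and "\<And>r. (\<forall>i. r $ i \<in> B) \<Longrightarrow> f r \<in> T"
  obtains r s where "\<forall>i. r $ i \<in> B" "\<forall>i. s $ i \<in> B" "r \<noteq> s" "f r = f s"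
proof -
  let ?S = "{r :: 'a ^ 'n. \<forall>i. r $ i \<in> B}"
  have "\<not> inj_on f ?S"
  proof
    assume "inj_on f ?S"
    then have "card ?S \<le> card T" using assms by (intro card_inj_on_le) auto
    then show False using assms by (simp add: card_vec_box)
  qed
  then show ?thesis using that unfolding inj_on_def by blast
qed

lemma dist_int_nonneg: "dist_int x \<ge> 0"
  unfolding dist_int_def by (rule cInf_greatest) auto

lemma dist_int_le: "dist_int x \<le> \<bar>x - of_int k\<bar>"
  unfolding dist_int_def by (rule cInf_lower) (auto intro: bdd_belowI[where m=0])

lemma abs_le_supnorm: "\<bar>x $ i\<bar> \<le> supnorm x"
  unfolding supnorm_def by (rule Max_ge) auto

lemma supnorm_nonneg: "supnorm x \<ge> 0"
  using abs_le_supnorm[of x] abs_ge_zero order_trans by blast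

lemma dist_lattice_nonneg: "dist_lattice x \<ge> 0"
  unfolding dist_lattice_def by (rule cInf_greatest) (auto simp: supnorm_nonneg)

lemma dist_lattice_less_imp:
  assumes "dist_lattice x < \<epsilon>"
  obtains p :: "int ^ 'n::finite" where "\<forall>i. \<bar>x $ i - of_int (p $ i)\<bar> < \<epsilon>"
proof -
  obtain p :: "int ^ 'n" where "supnorm (x - (\<chi> i. of_int (p $ i))) < \<epsilon>"
  proof -
    have "Inf {supnorm (x - (\<chi> i. of_int (p $ i))) | p :: int ^ 'n. True} < \<epsilon>"
      using assms unfolding dist_lattice_def .
    then obtain z where "z \<in> {supnorm (x - (\<chi> i. of_int (p $ i))) | p :: int ^ 'n. True}" "z < \<epsilon>"
      by (metis (mono_tags, lifting) cInf_lessD empty_Collect_eq)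
    then show ?thesis using that by auto
  qed
  then show ?thesis
    using that abs_le_supnorm[of "x - (\<chi> i. of_int (p $ i))"] by (auto intro: le_less_trans)
qed

lemma abs_le_int_supnorm: "\<bar>r $ i\<bar> \<le> int_supnorm r"
  unfolding int_supnorm_def by (rule Max_ge) auto

lemma int_supnorm_le_iff: "int_supnorm r \<le> K \<longleftrightarrow> (\<forall>i. \<bar>r $ i\<bar> \<le> K)"
  unfolding int_supnorm_def by (subst Max_le_iff) auto

lemma int_supnorm_pos: "r \<noteq> 0 \<Longrightarrow> int_supnorm r > 0"
  by (metis abs_le_int_supnorm abs_le_zero_iff linorder_not_le order.trans vec_eq_iff zero_index)

lemma finite_int_supnorm_le: "finite {r :: int ^ 'n::finite. real_of_int (int_supnorm r) \<le> R}"
proof (rule finite_subset)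
  show "{r :: int ^ 'n. real_of_int (int_supnorm r) \<le> R} \<subseteq> {r. \<forall>i. r $ i \<in> {-\<lfloor>R\<rfloor>..\<lfloor>R\<rfloor>}}"
  proof (clarify)
    fix r :: "int ^ 'n" and i assume "real_of_int (int_supnorm r) \<le> R"
    then have "\<bar>r $ i\<bar> \<le> \<lfloor>R\<rfloor>"
      using abs_le_int_supnorm[of r i] by (simp add: le_floor_iff)
    then show "r $ i \<in> {-\<lfloor>R\<rfloor>..\<lfloor>R\<rfloor>}" by auto
  qed
  show "finite {r :: int ^ 'n. \<forall>i. r $ i \<in> {-\<lfloor>R\<rfloor>..\<lfloor>R\<rfloor>}}"
    by (rule finite_vec_box) simp
qed

lemma min_simult_attained:
  assumes "1 \<le> Q"
  obtains q :: int where "0 < q" "real_of_int q \<le> Q" "min_simult \<alpha> Q = dist_lattice (of_int q *\<^sub>R \<alpha>)"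
proof -
  let ?D = "{q :: int. 0 < q \<and> real_of_int q \<le> Q}"
  have "?D \<subseteq> {1..\<lfloor>Q\<rfloor>}" by (auto simp: le_floor_iff)
  then have "finite ?D" by (rule finite_subset) simp
  moreover have "?D \<noteq> {}" using assms by (auto intro!: exI[of _ 1])
  ultimately have "min_simult \<alpha> Q \<in> (\<lambda>q::int. dist_lattice (of_int q *\<^sub>R \<alpha>)) ` ?D"
    unfolding min_simult_def by (intro Min_in) auto
  then show ?thesis using that by auto
qed

lemma min_simult_nonneg: "1 \<le> Q \<Longrightarrow> 0 \<le> min_simult \<alpha> Q"
  by (metis min_simult_attained dist_lattice_nonneg)

lemma min_linform_le:
  assumes "r \<noteq> 0" "real_of_int (int_supnorm r) \<le> R"
  shows "min_linform \<alpha> R \<le> dist_int (int_inner r \<alpha>)"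
  unfolding min_linform_def using assms int_supnorm_pos[of r]
  by (intro Min_le finite_imageI finite_subset[OF _ finite_int_supnorm_le[of R]]) auto

lemma min_linform_nonneg:
  fixes \<alpha> :: "real ^ 'n::finite"
  assumes "1 \<le> R"
  shows "0 \<le> min_linform \<alpha> (R :: real)"
proof -
  let ?L = "{r :: int ^ 'n. 0 < int_supnorm r \<and> real_of_int (int_supnorm r) \<le> R}"
  have "int_supnorm ((\<chi> i. 1) :: int ^ 'n) = 1"
    using abs_le_int_supnorm[of "(\<chi> i. 1) :: int ^ 'n"] by (simp add: antisym int_supnorm_le_iff)
  then have "(\<chi> i. 1) \<in> ?L" using assms by simp
  then have "?L \<noteq> {}" by blast
  moreover have "finite ?L" by (rule finite_subset[OF _ finite_int_supnorm_le[of R]]) auto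
  ultimately have "min_linform \<alpha> R \<in> (\<lambda>r. dist_int (int_inner r \<alpha>)) ` ?L"
    unfolding min_linform_def by (intro Min_in) auto
  then show ?thesis using dist_int_nonneg by auto
qed

(* The min puts the endpoint x = A into the last of the M buckets. *)
definition interval_bucket :: "int \<Rightarrow> real \<Rightarrow> real \<Rightarrow> int" where
  "interval_bucket M A x = min (M - 1) \<lfloor>M * (x + A) / (2 * A)\<rfloor>"

lemma interval_bucket_range:
  assumes "A > 0" "M \<ge> 1" "\<bar>x\<bar> \<le> A"
  shows "interval_bucket M A x \<in> {0..<M}"
proof -
  have "0 \<le> M * (x + A) / (2 * A)" using assms by (intro divide_nonneg_pos mult_nonneg_nonneg) auto
  then show ?thesis unfolding interval_bucket_def using assms by auto
qed

lemma interval_bucket_eq_imp_close: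
  assumes "A > 0" "M \<ge> 1" "\<bar>x\<bar> \<le> A" "\<bar>y\<bar> \<le> A"
    and "interval_bucket M A x = interval_bucket M A y"
  shows "\<bar>x - y\<bar> \<le> 2 * A / M"
proof -
  define u where "u = M * (x + A) / (2 * A)"
  define v where "v = M * (y + A) / (2 * A)"
  have "u \<le> M" "v \<le> M" using assms unfolding u_def v_def by (simp_all add: field_simps)
  moreover have "min (M - 1) \<lfloor>u\<rfloor> = min (M - 1) \<lfloor>v\<rfloor>"
    using assms(5) unfolding interval_bucket_def u_def v_def .
  ultimately have "\<bar>u - v\<bar> \<le> 1"
    by (cases "\<lfloor>u\<rfloor> < M - 1 \<and> \<lfloor>v\<rfloor> < M - 1") linarith+
  moreover have "u - v = M * (x - y) / (2 * A)"
    unfolding u_def v_def using assms by (simp add: field_simps)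
  ultimately have "\<bar>M * (x - y) / (2 * A)\<bar> \<le> 1" by simp
  then have "\<bar>M\<bar> * \<bar>x - y\<bar> \<le> 2 * A" using assms by (simp add: abs_mult divide_le_eq abs_divide)
  then show ?thesis using assms by (simp add: field_simps)
qed

lemma abs_int_linear_form_le:
  fixes r :: "int ^ 'n::finite" and \<eta> :: "real ^ 'n" and N :: int and \<epsilon> :: real
  assumes "\<forall>i. \<bar>r $ i\<bar> \<le> N" "\<forall>i. \<bar>\<eta> $ i\<bar> \<le> \<epsilon>"
  shows "\<bar>\<Sum>i\<in>UNIV. of_int (r $ i) * \<eta> $ i\<bar> \<le> real CARD('n) * of_int N * \<epsilon>"
proof -
  have "\<bar>\<Sum>i\<in>UNIV. of_int (r $ i) * \<eta> $ i\<bar> \<le> (\<Sum>i\<in>UNIV. \<bar>of_int (r $ i) * \<eta> $ i\<bar>)"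
    by (rule sum_abs)
  also have "\<dots> \<le> (\<Sum>i\<in>(UNIV :: 'n set). of_int N * \<epsilon>)"
  proof (intro sum_mono)
    fix i
    have "\<bar>of_int (r $ i)\<bar> \<le> (of_int N :: real)" using assms(1) by (metis of_int_abs of_int_le_iff)
    then show "\<bar>of_int (r $ i) * \<eta> $ i\<bar> \<le> of_int N * \<epsilon>"
      unfolding abs_mult using assms(2) by (intro mult_mono) auto
  qed
  finally show ?thesis by simp
qed

lemma pigeonhole_int_linear_form:
  fixes p :: "int ^ 'n::finite" and \<eta> :: "real ^ 'n" and N q M :: int and \<epsilon> :: real
  assumes "N \<ge> 1" "q \<ge> 1" "M \<ge> 1" "q * M < (N + 1) ^ CARD('n)"
    and "\<epsilon> > 0" "\<forall>i. \<bar>\<eta> $ i\<bar> \<le> \<epsilon>"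
  obtains r where "r \<noteq> 0" "\<forall>i. \<bar>r $ i\<bar> \<le> N" "q dvd (\<Sum>i\<in>UNIV. r $ i * p $ i)"
    "\<bar>\<Sum>i\<in>UNIV. of_int (r $ i) * \<eta> $ i\<bar> \<le> 2 * real CARD('n) * of_int N * \<epsilon> / of_int M"
proof -
  define A where "A = real CARD('n) * of_int N * \<epsilon>"
  define x where "x r = (\<Sum>i\<in>UNIV. of_int (r $ i) * \<eta> $ i)" for r :: "int ^ 'n"
  define f where "f r = ((\<Sum>i\<in>UNIV. r $ i * p $ i) mod q, interval_bucket M A (x r))" for r
  have "A > 0" unfolding A_def using assms by simp
  have xA: "\<bar>x r\<bar> \<le> A" if "\<forall>i. r $ i \<in> {0..N}" for r
    unfolding x_def A_def using that assms by (intro abs_int_linear_form_le) auto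
  obtain r1 r2 where r12: "\<forall>i. r1 $ i \<in> {0..N}" "\<forall>i. r2 $ i \<in> {0..N}" "r1 \<noteq> r2" "f r1 = f r2"
  proof (rule pigeonhole_vec_box[of "{0..N}" "{0..<q} \<times> {0..<M}" f])
    have "int (card ({0..<q} \<times> {0..<M})) < int (card {0..N} ^ CARD('n))"
      using assms by (simp add: card_cartesian_product)
    then show "card ({0..<q} \<times> {0..<M}) < card {0..N} ^ CARD('n)" by linarith
    show "f r \<in> {0..<q} \<times> {0..<M}" if "\<forall>i. r $ i \<in> {0..N}" for r
      using interval_bucket_range[OF \<open>A > 0\<close> \<open>M \<ge> 1\<close> xA[OF that]] \<open>q \<ge> 1\<close>
      unfolding f_def by simp
  qed auto
  show ?thesis
  proof (rule that[of "r1 - r2"])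
    show "r1 - r2 \<noteq> 0" using r12 by simp
    show "\<forall>i. \<bar>(r1 - r2) $ i\<bar> \<le> N"
    proof
      fix i
      show "\<bar>(r1 - r2) $ i\<bar> \<le> N" using r12(1,2)[rule_format, of i] by auto
    qed
    have "(\<Sum>i\<in>UNIV. (r1 - r2) $ i * p $ i) = (\<Sum>i\<in>UNIV. r1 $ i * p $ i) - (\<Sum>i\<in>UNIV. r2 $ i * p $ i)"
      by (simp add: left_diff_distrib sum_subtractf)
    then show "q dvd (\<Sum>i\<in>UNIV. (r1 - r2) $ i * p $ i)"
      using r12(4) unfolding f_def by (simp add: mod_eq_dvd_iff)
    have "(\<Sum>i\<in>UNIV. of_int ((r1 - r2) $ i) * \<eta> $ i) = x r1 - x r2"
      unfolding x_def by (simp add: left_diff_distrib sum_subtractf)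
    also have "\<bar>x r1 - x r2\<bar> \<le> 2 * A / M"
      using r12 xA \<open>A > 0\<close> assms unfolding f_def by (intro interval_bucket_eq_imp_close) auto
    finally show "\<bar>\<Sum>i\<in>UNIV. of_int ((r1 - r2) $ i) * \<eta> $ i\<bar> \<le> 2 * real CARD('n) * of_int N * \<epsilon> / of_int M"
      unfolding A_def by (simp add: mult.assoc)
  qed
qed

lemma dist_int_inner_le_of_dvd:
  fixes r p :: "int ^ 'n::finite" and q :: int
  assumes "q > 0" "q dvd (\<Sum>i\<in>UNIV. r $ i * p $ i)"
  shows "dist_int (int_inner r \<alpha>)
           \<le> \<bar>\<Sum>i\<in>UNIV. of_int (r $ i) * (of_int q * \<alpha> $ i - of_int (p $ i))\<bar> / q"
proof -
  obtain c where c: "(\<Sum>i\<in>UNIV. r $ i * p $ i) = q * c" using assms(2) by blast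
  have "of_int q * int_inner r \<alpha>
          = of_int (\<Sum>i\<in>UNIV. r $ i * p $ i) + (\<Sum>i\<in>UNIV. of_int (r $ i) * (of_int q * \<alpha> $ i - of_int (p $ i)))"
    unfolding int_inner_def by (simp add: sum_distrib_left sum.distrib[symmetric] algebra_simps)
  then have "int_inner r \<alpha> - of_int c = (\<Sum>i\<in>UNIV. of_int (r $ i) * (of_int q * \<alpha> $ i - of_int (p $ i))) / q"
    using c assms(1) by (simp add: field_simps del: of_int_sum)
  then show ?thesis using dist_int_le[of "int_inner r \<alpha>" c] assms(1) by (simp add: abs_divide)
qed

lemma min_linform_le_of_simultaneous_approx:
  fixes \<alpha> :: "real ^ 'n::finite" and p :: "int ^ 'n" and N q :: int and \<epsilon> :: real
  assumes "N \<ge> 1" "real_of_int N \<le> R" "0 < q" "q \<le> N ^ CARD('n)"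
    and "\<epsilon> > 0" "\<forall>i. \<bar>of_int q * \<alpha> $ i - of_int (p $ i)\<bar> \<le> \<epsilon>"
  shows "min_linform \<alpha> R \<le> 4 * real CARD('n) * of_int N * \<epsilon> / of_int N ^ CARD('n)"
proof -
  define M where "M = N ^ CARD('n) div q"
  have "M > 0" unfolding M_def using assms by (simp add: pos_imp_zdiv_pos_iff)
  then have "M \<ge> 1" by simp
  have split: "N ^ CARD('n) = q * M + N ^ CARD('n) mod q" unfolding M_def by simp
  have "N ^ CARD('n) < (N + 1) ^ CARD('n)" using assms by (intro power_strict_mono) auto
  then have qM_less: "q * M < (N + 1) ^ CARD('n)"
    using split pos_mod_sign[OF assms(3), of "N ^ CARD('n)"] by linarith
  have "q \<le> q * M" using \<open>M \<ge> 1\<close> assms(3) by simp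
  then have qM_ge: "N ^ CARD('n) \<le> 2 * (q * M)"
    using split pos_mod_bound[OF assms(3), of "N ^ CARD('n)"] by linarith
  define \<eta> :: "real ^ 'n" where "\<eta> = (\<chi> i. of_int q * \<alpha> $ i - of_int (p $ i))"
  obtain r where r: "r \<noteq> 0" "\<forall>i. \<bar>r $ i\<bar> \<le> N" "q dvd (\<Sum>i\<in>UNIV. r $ i * p $ i)"
    and r_\<eta>: "\<bar>\<Sum>i\<in>UNIV. of_int (r $ i) * \<eta> $ i\<bar> \<le> 2 * real CARD('n) * of_int N * \<epsilon> / of_int M"
    using pigeonhole_int_linear_form[of N q M \<epsilon> \<eta> p] assms \<open>M \<ge> 1\<close> qM_less unfolding \<eta>_def by auto
  have "int_supnorm r \<le> N" using r(2) by (simp add: int_supnorm_le_iff)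
  then have "min_linform \<alpha> R \<le> dist_int (int_inner r \<alpha>)"
    using r(1) assms(2) by (intro min_linform_le) auto
  also have "\<dots> \<le> \<bar>\<Sum>i\<in>UNIV. of_int (r $ i) * \<eta> $ i\<bar> / q"
    using dist_int_inner_le_of_dvd[OF assms(3) r(3)] unfolding \<eta>_def by simp
  also have "\<dots> \<le> (2 * real CARD('n) * of_int N * \<epsilon> / of_int M) / q"
    using r_\<eta> assms(3) by (intro divide_right_mono) auto
  also have "\<dots> = 4 * real CARD('n) * of_int N * \<epsilon> / (2 * (of_int q * of_int M))" by simp
  also have "\<dots> \<le> 4 * real CARD('n) * of_int N * \<epsilon> / of_int N ^ CARD('n)"
  proof (rule divide_left_mono)
    show "real_of_int N ^ CARD('n) \<le> 2 * (of_int q * of_int M)"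
      using qM_ge by (metis of_int_le_iff of_int_power of_int_mult of_int_numeral)
  qed (use assms \<open>M \<ge> 1\<close> in auto)
  finally show ?thesis .
qed

lemma min_linform_le_min_simult:
  fixes \<alpha> :: "real ^ 'n::finite" and N :: int
  assumes "N \<ge> 1" "real_of_int N \<le> R"
  shows "min_linform \<alpha> R
           \<le> 4 * real CARD('n) * of_int N / of_int N ^ CARD('n) * min_simult \<alpha> (real_of_int N ^ CARD('n))"
proof -
  define c where "c = 4 * real CARD('n) * of_int N / of_int N ^ CARD('n)"
  have "c > 0" unfolding c_def using assms by simp
  have "real_of_int N ^ CARD('n) \<ge> 1" using assms by simp
  then obtain q :: int where q: "0 < q" "real_of_int q \<le> real_of_int N ^ CARD('n)"
    and min_q: "min_simult \<alpha> (real_of_int N ^ CARD('n)) = dist_lattice (of_int q *\<^sub>R \<alpha>)"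
    by (rule min_simult_attained)
  (* Approached from above, since the pigeonhole step needs a positive tolerance. *)
  have "min_linform \<alpha> R / c \<le> \<epsilon>" if lt: "dist_lattice (of_int q *\<^sub>R \<alpha>) < \<epsilon>" for \<epsilon>
  proof -
    obtain p :: "int ^ 'n" where p: "\<forall>i. \<bar>of_int q * \<alpha> $ i - of_int (p $ i)\<bar> < \<epsilon>"
      using dist_lattice_less_imp[OF lt] by auto
    moreover have "\<epsilon> > 0" using lt dist_lattice_nonneg le_less_trans by blast
    moreover have "q \<le> N ^ CARD('n)" using q(2) by (metis of_int_le_iff of_int_power)
    ultimately have "min_linform \<alpha> R \<le> 4 * real CARD('n) * of_int N * \<epsilon> / of_int N ^ CARD('n)"
      using p by (intro min_linform_le_of_simultaneous_approx[OF assms q(1), where p = p]) (auto simp: less_imp_le)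
    then have "min_linform \<alpha> R \<le> c * \<epsilon>" unfolding c_def by simp
    then show ?thesis using \<open>c > 0\<close> by (simp add: field_simps)
  qed
  then have "min_linform \<alpha> R / c \<le> min_simult \<alpha> (real_of_int N ^ CARD('n))"
    unfolding min_q by (rule dense_ge)
  then have "min_linform \<alpha> R \<le> c * min_simult \<alpha> (real_of_int N ^ CARD('n))"
    using \<open>c > 0\<close> by (simp add: pos_divide_le_eq mult.commute)
  then show ?thesis unfolding c_def .
qed

lemma powr_min_linform_le_powr_min_simult:
  fixes \<alpha> :: "real ^ 'n::finite" and \<omega> R :: real
  assumes "real CARD('n) - 1 + real CARD('n) * \<omega> \<ge> 0" "R \<ge> 1"
  shows "R powr (real CARD('n) - 1 + real CARD('n) * \<omega>) * min_linform \<alpha> R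
           \<le> 4 * real CARD('n) * 2 powr (real CARD('n) - 1 + real CARD('n) * \<omega>)
              * ((real_of_int \<lfloor>R\<rfloor> ^ CARD('n)) powr \<omega> * min_simult \<alpha> (real_of_int \<lfloor>R\<rfloor> ^ CARD('n)))"
proof -
  define d where "d = real CARD('n)"
  define w where "w = d - 1 + d * \<omega>"
  define N where "N = real_of_int \<lfloor>R\<rfloor>"
  define m where "m = min_simult \<alpha> (N ^ CARD('n))"
  have "\<lfloor>R\<rfloor> \<ge> 1" "N \<le> R" unfolding N_def using assms(2) by linarith+
  then have "R \<le> 2 * N" unfolding N_def by linarith
  have "m \<ge> 0" unfolding m_def using \<open>\<lfloor>R\<rfloor> \<ge> 1\<close> by (intro min_simult_nonneg) (simp add: N_def)
  have N_powr: "N powr w * N / N ^ CARD('n) = (N ^ CARD('n)) powr \<omega>"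
  proof -
    have "N > 0" using \<open>\<lfloor>R\<rfloor> \<ge> 1\<close> by (simp add: N_def)
    then have "N powr w * N / N ^ CARD('n) = N powr (w + 1 - d)"
      by (simp add: d_def powr_add powr_diff powr_realpow)
    also have "\<dots> = (N ^ CARD('n)) powr \<omega>"
      using \<open>N > 0\<close> by (simp add: w_def d_def powr_powr flip: powr_realpow)
    finally show ?thesis .
  qed
  have "R powr w * min_linform \<alpha> R \<le> R powr w * (4 * d * N / N ^ CARD('n) * m)"
    using min_linform_le_min_simult[OF \<open>\<lfloor>R\<rfloor> \<ge> 1\<close>, of R \<alpha>] \<open>N \<le> R\<close>
    unfolding d_def N_def m_def by (intro mult_left_mono) auto
  also have "\<dots> \<le> (2 * N) powr w * (4 * d * N / N ^ CARD('n) * m)"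
    using assms \<open>R \<le> 2 * N\<close> \<open>m \<ge> 0\<close> \<open>\<lfloor>R\<rfloor> \<ge> 1\<close>
    by (intro mult_right_mono powr_mono2) (auto simp: w_def d_def N_def)
  also have "\<dots> = 4 * d * 2 powr w * (N powr w * N / N ^ CARD('n) * m)"
    using \<open>N \<le> R\<close> \<open>\<lfloor>R\<rfloor> \<ge> 1\<close> by (simp add: powr_mult N_def)
  finally show ?thesis unfolding N_powr by (simp add: w_def d_def N_def m_def)
qed

theorem lemma3:
  fixes \<omega> :: real
  assumes "CARD('n::finite) \<ge> 2"
    and "\<omega> \<ge> 1 / real CARD('n)"
  shows "{\<alpha> :: real ^ 'n. \<alpha> \<in> Kd \<and> ((\<lambda>Q. Q powr \<omega> * min_simult \<alpha> Q) \<longlongrightarrow> 0) at_top}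
           \<subseteq> E_set (real CARD('n) - 1 + real CARD('n) * \<omega>)"
proof
  fix \<alpha> :: "real ^ 'n"
  assume "\<alpha> \<in> {\<alpha>. \<alpha> \<in> Kd \<and> ((\<lambda>Q. Q powr \<omega> * min_simult \<alpha> Q) \<longlongrightarrow> 0) at_top}"
  then have "\<alpha> \<in> Kd" and lim: "((\<lambda>Q. Q powr \<omega> * min_simult \<alpha> Q) \<longlongrightarrow> 0) at_top" by auto
  define w where "w = real CARD('n) - 1 + real CARD('n) * \<omega>"
  define g where "g Q = Q powr \<omega> * min_simult \<alpha> Q" for Q
  define c where "c = 4 * real CARD('n) * 2 powr w"
  have "1 \<le> real CARD('n) * \<omega>" using assms(2) by (simp add: divide_le_eq mult.commute)
  then have "w \<ge> 0" unfolding w_def using assms(1) by linarith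
  have "filterlim (\<lambda>R. real_of_int \<lfloor>R\<rfloor> ^ CARD('n)) at_top at_top"
    by (intro filterlim_pow_at_top filterlim_compose[OF filterlim_real_of_int_at_top]
        filterlim_floor_sequentially) simp
  from tendsto_mult_right_zero[OF filterlim_compose[OF lim[folded g_def] this]]
  have upper_lim: "((\<lambda>R. c * g (real_of_int \<lfloor>R\<rfloor> ^ CARD('n))) \<longlongrightarrow> 0) at_top" .
  have lower: "\<forall>\<^sub>F R in at_top. 0 \<le> R powr w * min_linform \<alpha> R"
    by (intro eventually_at_top_linorderI[of 1]) (simp add: min_linform_nonneg)
  have upper: "\<forall>\<^sub>F R in at_top. R powr w * min_linform \<alpha> R \<le> c * g (real_of_int \<lfloor>R\<rfloor> ^ CARD('n))"
    using \<open>w \<ge> 0\<close> powr_min_linform_le_powr_min_simult[of \<omega>] unfolding w_def c_def g_def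
    by (intro eventually_at_top_linorderI[of 1]) blast
  have "((\<lambda>R. R powr w * min_linform \<alpha> R) \<longlongrightarrow> 0) at_top"
    by (rule tendsto_sandwich[OF lower upper tendsto_const upper_lim])
  then show "\<alpha> \<in> E_set (real CARD('n) - 1 + real CARD('n) * \<omega>)"
    unfolding E_set_def w_def using \<open>\<alpha> \<in> Kd\<close> by simp
qed

end
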